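(* Let $a,b>0$ and define, for $w\in(0,\infty)$, $$\pi_2(w\mid a,b)=\frac{1}{B(a,b)}\frac{1}{1+w}\frac{1}{1+\log(1+w)}\frac{[\log\{1+\log(1+w)\}]^{a-1}}{[1+\log\{1+\log(1+w)\}]^{a+b}},$$ where $B$ is the beta function. Then $\int_0^\infty\pi_2(w\mid a,b)\,dw=1$; $\pi_2(w\mid a,b)$ is asymptotically proportional to $w^{a-1}$ as $w\to0$ and to $w^{-1}(\log w)^{-1}(\log\log w)^{-(1+b)}$ as $w\to\infty$; and $\pi=\pi_2(\cdot\mid a,b)$ satisfies both of the following with $c=b$ and some $C>0$, $M>0$: $$t\pi(t)\sim\frac{C}{\{1+\log(1+t)\}[1+\log\{1+\log(1+t)\}]^{1+c}}\quad(t\to\infty),$$ $$t\pi(t)\le M\frac{1}{1+\log(1+1/t)}\frac{1}{1+\log(1+t)}\frac{1}{[1+\log\{1+\log(1+1/t)\}]^{1+c}}\frac{1}{[1+\log\{1+\log(1+t)\}]^{1+c}}\quad\text{for all }t>0.$$ *)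

theory Defs
  imports "HOL-Analysis.Analysis" "HOL-Library.Landau_Symbols"
begin

definition pi2 :: "real \<Rightarrow> real \<Rightarrow> real \<Rightarrow> real" where
  "pi2 a b w = (1 / Beta a b) * (1 / (1 + w)) * (1 / (1 + ln (1 + w)))
     * (ln (1 + ln (1 + w)) powr (a - 1)) / ((1 + ln (1 + ln (1 + w))) powr (a + b))"

end

theory Submission
  imports Defs "HOL-Real_Asymp.Real_Asymp"
begin

(* The substitution w = exp (exp (x / (1 - x)) - 1) - 1, i.e. x = u / (1 + u) with
   u = ln (1 + ln (1 + w)), turns pi2 a b into the Beta(a, b) density on (0, 1), which has
   integral 1.  The asymptotic statements only involve elementary functions and are computed
   by multiseries expansion.  For the global bound, t * pi2 a b t multiplied by the two-sided
   logarithmic weight is continuous on (0, oo) and tends to 0 at 0 and to 1 / B(a, b) at oo,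
   hence it is bounded. *)

lemma Beta_pos_real: "a > 0 \<Longrightarrow> b > 0 \<Longrightarrow> Beta a b > (0::real)"
  unfolding Beta_def by simp

definition beta_density :: "real \<Rightarrow> real \<Rightarrow> real \<Rightarrow> real" where
  "beta_density a b x = x powr (a - 1) * (1 - x) powr (b - 1) / Beta a b"

lemma beta_density_nonneg: "a > 0 \<Longrightarrow> b > 0 \<Longrightarrow> 0 \<le> beta_density a b x"
  unfolding beta_density_def using Beta_pos_real[of a b] by simp

lemma has_integral_beta_density:
  assumes "a > 0" "b > 0"
  shows "(beta_density a b has_integral 1) {0<..<1}"
proof -
  have "((\<lambda>x. x powr (a - 1) * (1 - x) powr (b - 1) / Beta a b)
      has_integral Beta a b / Beta a b) {0..1}"
    using has_integral_Beta_real[OF assms] by (rule has_integral_divide)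
  then show ?thesis
    using Beta_pos_real[OF assms] by (simp add: has_integral_Icc_iff_Ioo beta_density_def[abs_def])
qed

lemma lebesgue_integral_beta_density:
  assumes "a > 0" "b > 0"
  shows "set_integrable lborel (einterval 0 1) (beta_density a b)"
    and "(LBINT x=0..1. beta_density a b x) = 1"
proof -
  have has_int: "(beta_density a b has_integral 1) {0<..<1}"
    using has_integral_beta_density[OF assms] .
  have "beta_density a b absolutely_integrable_on {0<..<1}"
    using has_int beta_density_nonneg[OF assms]
    by (intro nonnegative_absolutely_integrable_1) (auto dest: has_integral_integrable)
  moreover have "(\<lambda>x. indicator {0<..<1} x *\<^sub>R beta_density a b x) \<in> borel_measurable lborel"
    unfolding beta_density_def by measurable
  ultimately have integrable: "set_integrable lborel {0<..<1} (beta_density a b)"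
    unfolding absolutely_integrable_on_def set_integrable_def using integrable_completion by blast
  then show "set_integrable lborel (einterval 0 1) (beta_density a b)"
    by (simp add: zero_ereal_def one_ereal_def)
  have "(LBINT x=0..1. beta_density a b x) = integral {0<..<1} (beta_density a b)"
    using set_borel_integral_eq_integral(2)[OF integrable]
    by (simp add: interval_lebesgue_integral_def zero_ereal_def one_ereal_def)
  then show "(LBINT x=0..1. beta_density a b x) = 1"
    using has_int by (simp add: integral_unique)
qed

definition pi2_transform :: "real \<Rightarrow> real" where
  "pi2_transform x = exp (exp (x / (1 - x)) - 1) - 1"

definition pi2_transform_deriv :: "real \<Rightarrow> real" where
  "pi2_transform_deriv x = exp (exp (x / (1 - x)) - 1) * exp (x / (1 - x)) / (1 - x)\<^sup>2"

lemma pi2_transform_has_real_derivative: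
  "x < 1 \<Longrightarrow> (pi2_transform has_real_derivative pi2_transform_deriv x) (at x)"
  unfolding pi2_transform_def pi2_transform_deriv_def
  by (rule derivative_eq_intros refl | simp)+ (simp add: field_simps power2_eq_square)

lemma pi2_transform_pos: "0 < x \<Longrightarrow> x < 1 \<Longrightarrow> pi2_transform x > 0"
  unfolding pi2_transform_def by simp

lemma pi2_transform_tendsto_0: "(pi2_transform \<longlongrightarrow> 0) (at_right 0)"
  unfolding pi2_transform_def by real_asymp

lemma filterlim_pi2_transform_at_top: "filterlim pi2_transform at_top (at_left 1)"
  unfolding pi2_transform_def by real_asymp

lemma pi2_transform_change_of_variables:
  assumes "0 < x" "x < 1"
  shows "pi2 a b (pi2_transform x) * pi2_transform_deriv x = beta_density a b x"
proof -
  define u where "u = x / (1 - x)"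
  have "u > 0" using assms unfolding u_def by simp
  have one_plus_u: "1 + u = 1 / (1 - x)" and x_eq: "x = u / (1 + u)"
    using assms unfolding u_def by (simp_all add: field_simps)
  have loglog: "1 + pi2_transform x = exp (exp u - 1)" "1 + ln (1 + pi2_transform x) = exp u"
    "ln (1 + ln (1 + pi2_transform x)) = u"
    unfolding pi2_transform_def u_def by simp_all
  have deriv: "pi2_transform_deriv x = exp (exp u - 1) * exp u * (1 + u) powr 2"
  proof -
    have "(1 + u) powr 2 = (1 + u)\<^sup>2" using \<open>u > 0\<close> by (subst powr_numeral) auto
    then show ?thesis
      unfolding pi2_transform_deriv_def u_def[symmetric] one_plus_u by (simp add: power_divide)
  qed
  have "pi2 a b (pi2_transform x) * pi2_transform_deriv x
      = u powr (a - 1) / (1 + u) powr (a + b) * (1 + u) powr 2 / Beta a b"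
    unfolding pi2_def deriv loglog by simp
  also have "\<dots> = beta_density a b x"
  proof -
    have "(1 + u) powr (a + b) = (1 + u) powr (a - 1) * (1 + u) powr (b - 1) * (1 + u) powr 2"
      by (simp flip: powr_add)
    moreover have "x powr (a - 1) = u powr (a - 1) / (1 + u) powr (a - 1)"
      unfolding x_eq using \<open>u > 0\<close> by (simp add: powr_divide)
    moreover have "(1 - x) powr (b - 1) = 1 / (1 + u) powr (b - 1)"
      using one_plus_u \<open>u > 0\<close> assms by (simp add: powr_divide)
    ultimately show ?thesis
      unfolding beta_density_def using \<open>u > 0\<close> by simp
  qed
  finally show ?thesis .
qed

lemma ln_one_plus_pos: "(t::real) > 0 \<Longrightarrow> 0 < ln (1 + t)"
  by (simp add: ln_gt_zero)

lemma ln_ln_one_plus_pos: "(t::real) > 0 \<Longrightarrow> 0 < ln (1 + ln (1 + t))"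
  by (simp add: ln_one_plus_pos)

lemma pi2_nonneg: "a > 0 \<Longrightarrow> b > 0 \<Longrightarrow> w > 0 \<Longrightarrow> 0 \<le> pi2 a b w"
  unfolding pi2_def using Beta_pos_real[of a b] ln_ln_one_plus_pos[of w] by simp

lemma continuous_on_pi2: "continuous_on {0<..} (pi2 a b)"
  unfolding pi2_def[abs_def]
  by (intro continuous_intros) (auto dest: ln_one_plus_pos ln_ln_one_plus_pos)

lemma has_integral_pi2:
  assumes "a > 0" "b > 0"
  shows "(pi2 a b has_integral 1) {0<..}"
proof -
  let ?g = pi2_transform and ?g' = pi2_transform_deriv
  have deriv: "DERIV ?g x :> ?g' x" if "0 < ereal x" "ereal x < 1" for x
    using that by (intro pi2_transform_has_real_derivative) simp
  have cont_pi2: "isCont (pi2 a b) (?g x)" if "0 < ereal x" "ereal x < 1" for x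
    using that continuous_on_pi2 pi2_transform_pos
    by (simp add: continuous_on_eq_continuous_at)
  have cont_deriv: "isCont ?g' x" if "0 < ereal x" "ereal x < 1" for x
    using that unfolding pi2_transform_deriv_def by (intro continuous_intros) auto
  have nonneg: "0 \<le> pi2 a b (?g x)" if "0 < ereal x" "ereal x < 1" for x
    using that assms by (intro pi2_nonneg pi2_transform_pos) auto
  have deriv_nonneg: "0 \<le> ?g' x" if "0 \<le> ereal x" "ereal x \<le> 1" for x
    unfolding pi2_transform_deriv_def by simp
  have lim_0: "((ereal \<circ> ?g \<circ> real_of_ereal) \<longlongrightarrow> 0) (at_right 0)"
    unfolding zero_ereal_def at_right_ereal tendsto_compose_filtermap[symmetric]
    using pi2_transform_tendsto_0 by (simp add: comp_def)
  have lim_1: "((ereal \<circ> ?g \<circ> real_of_ereal) \<longlongrightarrow> \<infinity>) (at_left 1)"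
    unfolding one_ereal_def at_left_ereal tendsto_compose_filtermap[symmetric]
    using filterlim_pi2_transform_at_top by (simp add: comp_def tendsto_PInfty_eq_at_top)
  have change: "pi2 a b (?g x) * ?g' x = beta_density a b x" if "x \<in> einterval 0 1" for x
    using that
    by (intro pi2_transform_change_of_variables) (auto simp: zero_ereal_def one_ereal_def)
  have integrable_subst: "set_integrable lborel (einterval 0 1) (\<lambda>x. pi2 a b (?g x) * ?g' x)"
    using lebesgue_integral_beta_density(1)[OF assms]
    by (subst set_integrable_cong[OF refl refl change]) auto
  have ends: "(0::ereal) < 1" by simp
  note subst = interval_integral_substitution_nonneg[OF ends deriv cont_pi2 cont_deriv
      nonneg deriv_nonneg lim_0 lim_1 integrable_subst]
  have integrable: "set_integrable lborel {0<..} (pi2 a b)"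
    using subst(1) by (simp add: zero_ereal_def)
  have "(LINT w : {0<..} | lborel. pi2 a b w) = (LBINT w=0..\<infinity>. pi2 a b w)"
    by (simp add: interval_lebesgue_integral_def zero_ereal_def)
  also have "\<dots> = (LBINT x=0..1. pi2 a b (?g x) * ?g' x)"
    by (rule subst(2))
  also have "\<dots> = (LBINT x=0..1. beta_density a b x)"
    by (rule interval_integral_cong) (simp add: change)
  also have "\<dots> = 1"
    by (rule lebesgue_integral_beta_density(2)[OF assms])
  finally show ?thesis
    using set_borel_integral_eq_integral[OF integrable] by (simp add: has_integral_iff)
qed

lemma pi2_asymp_equiv_at_right_0:
  "a > 0 \<Longrightarrow> b > 0 \<Longrightarrow> pi2 a b \<sim>[at_right 0] (\<lambda>w. (1 / Beta a b) * w powr (a - 1))"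
  using Beta_pos_real[of a b] unfolding pi2_def by real_asymp

lemma pi2_asymp_equiv_at_top:
  "a > 0 \<Longrightarrow> b > 0 \<Longrightarrow>
    pi2 a b \<sim>[at_top] (\<lambda>w. (1 / Beta a b) * (1 / w) * (1 / ln w) * ln (ln w) powr (-(1 + b)))"
  using Beta_pos_real[of a b] unfolding pi2_def by real_asymp

definition log_factor :: "real \<Rightarrow> real \<Rightarrow> real" where
  "log_factor c t = (1 + ln (1 + t)) * (1 + ln (1 + ln (1 + t))) powr (1 + c)"

lemma log_factor_pos:
  assumes "t \<ge> 0"
  shows "0 < log_factor c t"
proof -
  have "0 \<le> ln (1 + t)"
    using assms by simp
  moreover from this have "0 \<le> ln (1 + ln (1 + t))"
    by simp
  ultimately have "0 < 1 + ln (1 + t)" and "0 < 1 + ln (1 + ln (1 + t))"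
    by linarith+
  then show ?thesis
    unfolding log_factor_def by simp
qed

lemma continuous_on_log_factor: "continuous_on {0<..} (log_factor c)"
  unfolding log_factor_def[abs_def]
  by (intro continuous_intros) (auto dest: ln_one_plus_pos ln_ln_one_plus_pos)

lemma times_pi2_asymp_equiv_at_top:
  "a > 0 \<Longrightarrow> b > 0 \<Longrightarrow> (\<lambda>t. t * pi2 a b t) \<sim>[at_top] (\<lambda>t. (1 / Beta a b) / log_factor b t)"
  using Beta_pos_real[of a b] unfolding pi2_def log_factor_def by real_asymp

lemma tendsto_times_pi2_log_factors_at_right_0:
  "a > 0 \<Longrightarrow> b > 0 \<Longrightarrow>
    ((\<lambda>t. t * pi2 a b t * (log_factor b (1 / t) * log_factor b t)) \<longlongrightarrow> 0) (at_right 0)"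
  using Beta_pos_real[of a b] unfolding pi2_def log_factor_def by real_asymp

lemma tendsto_times_pi2_log_factors_at_top:
  "a > 0 \<Longrightarrow> b > 0 \<Longrightarrow>
    ((\<lambda>t. t * pi2 a b t * (log_factor b (1 / t) * log_factor b t)) \<longlongrightarrow> 1 / Beta a b) at_top"
  using Beta_pos_real[of a b] unfolding pi2_def log_factor_def by real_asymp

lemma bdd_above_image_Ioi_if_tendsto:
  fixes f :: "real \<Rightarrow> real"
  assumes "continuous_on {0<..} f" and "(f \<longlongrightarrow> l) (at_right 0)" and "(f \<longlongrightarrow> m) at_top"
  shows "bdd_above (f ` {0<..})"
proof -
  obtain d where "d > 0" and near_0: "\<And>t. 0 < t \<Longrightarrow> t < d \<Longrightarrow> f t < l + 1"
    using order_tendstoD(2)[OF assms(2), of "l + 1"] by (auto simp: eventually_at_right_field)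
  obtain T where near_top: "\<And>t. t \<ge> T \<Longrightarrow> f t < m + 1"
    using order_tendstoD(2)[OF assms(3), of "m + 1"] by (auto simp: eventually_at_top_linorder)
  have "continuous_on {d..T} f"
    using \<open>d > 0\<close> by (intro continuous_on_subset[OF assms(1)]) auto
  then have "bdd_above (f ` {d..T})"
    by (intro bounded_imp_bdd_above compact_imp_bounded compact_continuous_image) auto
  moreover have "bdd_above (f ` {0<..<d})"
    by (rule bdd_aboveI2[where M = "l + 1"]) (simp add: near_0 less_imp_le)
  moreover have "bdd_above (f ` {T..})"
    by (rule bdd_aboveI2[where M = "m + 1"]) (simp add: near_top less_imp_le)
  moreover have "{0<..} \<subseteq> {0<..<d} \<union> {d..T} \<union> {T..}"
    by auto
  ultimately show ?thesis
    by (metis bdd_above_Un bdd_above_mono image_Un image_mono)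
qed

lemma times_pi2_le_log_factors:
  assumes "a > 0" "b > 0"
  obtains M where "M > 0"
    and "\<And>t. t > 0 \<Longrightarrow> t * pi2 a b t \<le> M / (log_factor b (1 / t) * log_factor b t)"
proof -
  have "continuous_on {0<..} (\<lambda>t. t * pi2 a b t * (log_factor b (1 / t) * log_factor b t))"
    by (intro continuous_intros continuous_on_pi2 continuous_on_log_factor
        continuous_on_compose2[OF continuous_on_log_factor]) auto
  then obtain M
    where M: "\<And>t. t > 0 \<Longrightarrow> t * pi2 a b t * (log_factor b (1 / t) * log_factor b t) \<le> M"
    using bdd_above_image_Ioi_if_tendsto[OF _ tendsto_times_pi2_log_factors_at_right_0[OF assms]
        tendsto_times_pi2_log_factors_at_top[OF assms]]
    by (auto simp: bdd_above_def)
  show ?thesis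
  proof (rule that[of "max M 1"])
    fix t :: real
    assume "t > 0"
    then show "t * pi2 a b t \<le> max M 1 / (log_factor b (1 / t) * log_factor b t)"
      using M[of t] log_factor_pos[of t b] log_factor_pos[of "1 / t" b]
      by (simp add: pos_le_divide_eq)
  qed simp
qed

theorem mainTheorem3:
  fixes a b :: real
  assumes "a > 0" and "b > 0"
  shows "(pi2 a b has_integral 1) {0<..}
    \<and> (\<exists>K>0. pi2 a b \<sim>[at_right 0] (\<lambda>w. K * w powr (a - 1)))
    \<and> (\<exists>K>0. pi2 a b \<sim>[at_top]
           (\<lambda>w. K * (1 / w) * (1 / ln w) * ln (ln w) powr (-(1 + b))))
    \<and> (\<exists>C>0. (\<lambda>t. t * pi2 a b t) \<sim>[at_top]
           (\<lambda>t. C / ((1 + ln (1 + t)) * (1 + ln (1 + ln (1 + t))) powr (1 + b))))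
    \<and> (\<exists>M>0. \<forall>t>0. t * pi2 a b t \<le>
           M * (1 / (1 + ln (1 + 1 / t))) * (1 / (1 + ln (1 + t)))
             * (1 / (1 + ln (1 + ln (1 + 1 / t))) powr (1 + b))
             * (1 / (1 + ln (1 + ln (1 + t))) powr (1 + b)))"
proof -
  have K: "1 / Beta a b > 0"
    using Beta_pos_real[OF assms] by simp
  obtain M where "M > 0"
    and "\<And>t. t > 0 \<Longrightarrow> t * pi2 a b t \<le> M / (log_factor b (1 / t) * log_factor b t)"
    using times_pi2_le_log_factors[OF assms] by blast
  then have bound: "\<exists>M>0. \<forall>t>0. t * pi2 a b t \<le>
           M * (1 / (1 + ln (1 + 1 / t))) * (1 / (1 + ln (1 + t)))
             * (1 / (1 + ln (1 + ln (1 + 1 / t))) powr (1 + b))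
             * (1 / (1 + ln (1 + ln (1 + t))) powr (1 + b))"
    by (intro exI[of _ M]) (simp add: log_factor_def ac_simps)
  show ?thesis
    by (intro conjI bound exI[of _ "1 / Beta a b"] K has_integral_pi2[OF assms]
        pi2_asymp_equiv_at_right_0[OF assms] pi2_asymp_equiv_at_top[OF assms]
        times_pi2_asymp_equiv_at_top[OF assms, unfolded log_factor_def])
qed

end
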